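(* On $\mathbb{N}^3$ let $A_n=\{(n+1,n,n),(n,n+1,n),(n,n,n+1)\}$ and $B_n=\{(n,n+1,n+1),(n+1,n,n+1),(n+1,n+1,n)\}$, and let $\mu$ be the probability measure with $\mu(x)=\frac{1}{(\pi n)^2}$ for $x\in A_n\cup B_n$ and $\mu(x)=0$ for $x\notin\bigcup_n(A_n\cup B_n)$. Put $\mu_{ij}=\mathrm{Pr}_{ij}(\mu)$ and let $c:\mathbb{N}^3\to\{0,1\}$ with $c=1$ on $\bigcup_nB_n$ and $c=0$ elsewhere. Then $\mu$ is the only probability measure on $\mathbb{N}^3$ with projections $\mu_{12},\mu_{13},\mu_{23}$ (hence it is the unique optimal plan), and there are no functions $f_{ij}:\mathbb{N}^2\to[-\infty,+\infty)$ such that $f_{12}(n_1,n_2)+f_{13}(n_1,n_3)+f_{23}(n_2,n_3)\le c(n_1,n_2,n_3)$ for all $(n_1,n_2,n_3)\in\mathbb{N}^3$ with equality $\mu$-almost everywhere. In particular $\mu$ is not strongly $c$-monotone.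
   Context: $\mathrm{Pr}_{ij}$ is the projection of $\mathbb{N}^3$ onto coordinates $(i,j)$. A plan $\pi$ is strongly $c$-monotone if it is concentrated on a Borel set $\Gamma$ for which there exist Borel functions $f_{ij}:X_i\times X_j\to[-\infty,+\infty)$ with $\sum f_{ij}\le c$ everywhere and equality on $\Gamma$. *)

theory Defs
  imports "HOL-Probability.Probability"
begin

type_synonym pt3 = "nat \<times> nat \<times> nat"

definition Aset :: "nat \<Rightarrow> pt3 set" where
  "Aset n = {(n+1, n, n), (n, n+1, n), (n, n, n+1)}"

definition Bset :: "nat \<Rightarrow> pt3 set" where
  "Bset n = {(n, n+1, n+1), (n+1, n, n+1), (n+1, n+1, n)}"

definition mu_fun :: "pt3 \<Rightarrow> real" where
  "mu_fun x = (if \<exists>n\<ge>1. x \<in> Aset n \<union> Bset n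
     then 1 / (pi * real (THE n. n \<ge> 1 \<and> x \<in> Aset n \<union> Bset n))^2 else 0)"

definition mu :: "pt3 pmf" where
  "mu = embed_pmf mu_fun"

definition pr12 :: "pt3 \<Rightarrow> nat \<times> nat" where "pr12 x = (case x of (a,b,d) \<Rightarrow> (a,b))"
definition pr13 :: "pt3 \<Rightarrow> nat \<times> nat" where "pr13 x = (case x of (a,b,d) \<Rightarrow> (a,d))"
definition pr23 :: "pt3 \<Rightarrow> nat \<times> nat" where "pr23 x = (case x of (a,b,d) \<Rightarrow> (b,d))"

definition cost :: "pt3 \<Rightarrow> ereal" where
  "cost x = (if \<exists>n\<ge>1. x \<in> Bset n then 1 else 0)"

definition strongly_c_monotone :: "(pt3 \<Rightarrow> ereal) \<Rightarrow> pt3 pmf \<Rightarrow> bool" where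
  "strongly_c_monotone c p \<longleftrightarrow>
     (\<exists>\<Gamma> (f12 :: nat \<times> nat \<Rightarrow> ereal) (f13 :: nat \<times> nat \<Rightarrow> ereal) (f23 :: nat \<times> nat \<Rightarrow> ereal).
        \<Gamma> \<in> sets (count_space UNIV) \<and> (AE x in measure_pmf p. x \<in> \<Gamma>) \<and>
        f12 \<in> borel_measurable (count_space UNIV) \<and>
        f13 \<in> borel_measurable (count_space UNIV) \<and>
        f23 \<in> borel_measurable (count_space UNIV) \<and>
        (\<forall>z. f12 z \<noteq> \<infinity> \<and> f13 z \<noteq> \<infinity> \<and> f23 z \<noteq> \<infinity>) \<and>
        (\<forall>a b d. f12 (a,b) + f13 (a,d) + f23 (b,d) \<le> c (a,b,d)) \<and>
        (\<forall>a b d. (a,b,d) \<in> \<Gamma> \<longrightarrow> f12 (a,b) + f13 (a,d) + f23 (b,d) = c (a,b,d)))"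

end

theory Submission
  imports Defs
begin

text \<open>The mass of \<open>mu\<close> lies on the levels \<open>A\<^sub>n \<union> B\<^sub>n\<close>, \<open>n \<ge> 1\<close>, and adds up to \<open>1\<close> by the Basel
  problem. A plan with the same marginals only charges points whose coordinates pairwise differ by
  at most one; such a point has no off-diagonal projection if it is diagonal and exactly two
  otherwise, so comparing the expected number of off-diagonal projections shows that the plan
  charges only the levels as well. There every fibre of a marginal has at most two points: the
  fibres through level \<open>n\<close> force the plan to agree with \<open>mu\<close> up to one common signed defect
  \<open>t n\<close>, the fibre of \<open>pr12\<close> over \<open>(n+1, n+1)\<close> gives \<open>t (n+1) = t n\<close>, and \<open>t 0 = 0\<close>.

  If potentials were tight on the levels, then subtracting the three equations on \<open>A\<^sub>n\<close> from
  those on \<open>B\<^sub>n\<close> would leave \<open>D (n+1) - D n = 3\<close> for the diagonal sums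
  \<open>D n = f12 (n, n) + f13 (n, n) + f23 (n, n)\<close>; but \<open>D n \<le> c (n, n, n) = 0\<close>.\<close>

definition level_weight :: "nat \<Rightarrow> real" where
  "level_weight k = 1 / (pi * real k)^2"

abbreviation level :: "nat \<Rightarrow> pt3 set" where
  "level k \<equiv> Aset k \<union> Bset k"

definition all_levels :: "pt3 set" where
  "all_levels = (\<Union>k\<in>{1..}. level k)"

lemma level_index: "(a, b, d) \<in> level k \<Longrightarrow> k = (a + b + d) div 3"
  unfolding Aset_def Bset_def by auto

lemma level_unique: "x \<in> level k \<Longrightarrow> x \<in> level n \<Longrightarrow> n = k"
  by (cases x) (metis level_index)

lemma card_level: "card (level k) = 6"
  unfolding Aset_def Bset_def by auto

lemma mu_fun_eq_0: "x \<notin> all_levels \<Longrightarrow> mu_fun x = 0"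
  unfolding mu_fun_def all_levels_def by auto

lemma mu_fun_level:
  assumes x: "x \<in> level k"
  shows "mu_fun x = level_weight k"
proof (cases "k \<ge> 1")
  case True
  then have "(THE n. n \<ge> 1 \<and> x \<in> level n) = k"
    using x level_unique by (intro the_equality) blast+
  with x True show ?thesis
    unfolding mu_fun_def level_weight_def by auto
next
  case False
  then have "x \<notin> all_levels"
    using level_unique[OF x] unfolding all_levels_def by blast
  with False show ?thesis
    by (simp add: mu_fun_eq_0 level_weight_def)
qed

lemma level_weight_nonneg: "level_weight k \<ge> 0"
  unfolding level_weight_def by simp

lemma level_weight_pos: "k \<ge> 1 \<Longrightarrow> level_weight k > 0"
  unfolding level_weight_def by simp

lemma mu_fun_nonneg: "mu_fun x \<ge> 0"
  unfolding mu_fun_def by simp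

lemma mu_fun_eq_suminf:
  "ennreal (mu_fun x) = (\<Sum>k. ennreal (level_weight k) * indicator (level k) x)"
proof (cases "\<exists>k. x \<in> level k")
  case True
  then obtain m where m: "x \<in> level m" by blast
  have "(\<Sum>k. ennreal (level_weight k) * indicator (level k) x)
      = (\<Sum>k\<in>{m}. ennreal (level_weight k) * indicator (level k) x)"
    using level_unique[OF m] by (intro suminf_finite) (auto split: split_indicator)
  with m show ?thesis by (simp add: mu_fun_level)
next
  case False
  then show ?thesis by (simp add: mu_fun_eq_0 all_levels_def)
qed

text \<open>Basel problem; the term for \<open>k = 0\<close> vanishes because \<open>1 / 0 = 0\<close>.\<close>
lemma level_weight_sums: "(\<lambda>k. 6 * level_weight k) sums 1"
proof -
  have "(\<lambda>n. (6 / pi\<^sup>2) * (1 / real ((n + 1)\<^sup>2))) sums ((6 / pi\<^sup>2) * (pi\<^sup>2 / 6))"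
    by (intro sums_mult inverse_squares_sums)
  then have "(\<lambda>n. 6 * level_weight (Suc n)) sums 1"
    by (simp add: level_weight_def power_mult_distrib)
  then show ?thesis
    by (subst (asm) sums_Suc_iff) (simp add: level_weight_def)
qed

lemma nn_integral_mu_fun: "(\<integral>\<^sup>+x. mu_fun x \<partial>count_space UNIV) = 1"
proof -
  have level_integral: "(\<integral>\<^sup>+x. ennreal (level_weight k) * indicator (level k) x \<partial>count_space UNIV)
      = ennreal (6 * level_weight k)" for k
  proof -
    have "emeasure (count_space UNIV) (level k) = 6"
      using card_level[of k] by (simp add: Aset_def Bset_def)
    moreover have "(\<integral>\<^sup>+x. ennreal (level_weight k) * indicator (level k) x \<partial>count_space UNIV)
        = ennreal (level_weight k) * emeasure (count_space UNIV) (level k)"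
      by (rule nn_integral_cmult_indicator) simp
    ultimately show ?thesis
      by (simp add: ennreal_mult level_weight_nonneg mult.commute)
  qed
  have "(\<integral>\<^sup>+x. mu_fun x \<partial>count_space UNIV)
      = (\<Sum>k. \<integral>\<^sup>+x. ennreal (level_weight k) * indicator (level k) x \<partial>count_space UNIV)"
    by (simp add: mu_fun_eq_suminf nn_integral_suminf)
  also have "\<dots> = (\<Sum>k. ennreal (6 * level_weight k))"
    by (simp only: level_integral)
  also have "\<dots> = ennreal 1"
    using level_weight_sums by (intro suminf_ennreal_eq) (auto simp: level_weight_nonneg)
  finally show ?thesis
    by simp
qed

lemma pmf_mu: "pmf mu x = mu_fun x"
  unfolding mu_def by (rule pmf_embed_pmf[OF mu_fun_nonneg nn_integral_mu_fun])

lemma set_pmf_mu: "set_pmf mu = all_levels"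
proof (intro set_eqI iffI)
  fix x
  assume "x \<in> set_pmf mu"
  then have "mu_fun x \<noteq> 0"
    by (simp add: set_pmf_iff pmf_mu)
  then show "x \<in> all_levels"
    using mu_fun_eq_0 by blast
next
  fix x
  assume "x \<in> all_levels"
  then obtain k where "k \<ge> 1" "x \<in> level k"
    by (auto simp: all_levels_def)
  then show "x \<in> set_pmf mu"
    using level_weight_pos[of k] by (simp add: set_pmf_iff pmf_mu mu_fun_level)
qed

definition near_diag :: "(nat \<times> nat) set" where
  "near_diag = {(a, b). 1 \<le> a \<and> 1 \<le> b \<and> a \<le> b + 1 \<and> b \<le> a + 1}"

definition off_diag :: "(nat \<times> nat) set" where
  "off_diag = {(a, b). a \<noteq> b}"

lemma all_levels_near_diag:
  "x \<in> all_levels \<Longrightarrow> pr12 x \<in> near_diag \<and> pr13 x \<in> near_diag \<and> pr23 x \<in> near_diag"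
  unfolding all_levels_def Aset_def Bset_def near_diag_def pr12_def pr13_def pr23_def by auto

lemma near_diag_triple_cases:
  assumes "pr12 (a, b, d) \<in> near_diag" "pr13 (a, b, d) \<in> near_diag" "pr23 (a, b, d) \<in> near_diag"
  shows "(a = b \<and> b = d) \<or> (a, b, d) \<in> all_levels"
proof -
  define k where "k = min a (min b d)"
  have "k \<ge> 1" "(a, b, d) \<in> {(k, k, k)} \<union> level k"
    using assms unfolding k_def near_diag_def pr12_def pr13_def pr23_def Aset_def Bset_def
    by (auto simp: min_def)
  then show ?thesis
    unfolding all_levels_def by auto
qed

lemma indicator_off_diag_projections:
  assumes "pr12 x \<in> near_diag" "pr13 x \<in> near_diag" "pr23 x \<in> near_diag"
  shows "indicator (pr12 -` off_diag) x + indicator (pr13 -` off_diag) x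
      + indicator (pr23 -` off_diag) x = (2::real) * indicator all_levels x"
proof -
  obtain a b d where x: "x = (a, b, d)"
    by (cases x) auto
  have "(a = b \<and> b = d) \<or> (a, b, d) \<in> all_levels"
    using assms near_diag_triple_cases unfolding x by blast
  moreover have "(a, a, a) \<notin> all_levels" for a
    unfolding all_levels_def Aset_def Bset_def by auto
  moreover have "(a = b \<and> b \<noteq> d) \<or> (a = d \<and> a \<noteq> b) \<or> (b = d \<and> a \<noteq> b)"
    if "(a, b, d) \<in> all_levels"
    using that unfolding all_levels_def Aset_def Bset_def by auto
  ultimately show ?thesis
    unfolding x off_diag_def pr12_def pr13_def pr23_def
    by (auto simp: indicator_def)
qed

lemma measure_off_diag_marginals:
  fixes q :: "pt3 pmf"
  assumes "set_pmf (map_pmf pr12 q) \<subseteq> near_diag" "set_pmf (map_pmf pr13 q) \<subseteq> near_diag"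
    "set_pmf (map_pmf pr23 q) \<subseteq> near_diag"
  shows "measure (map_pmf pr12 q) off_diag + measure (map_pmf pr13 q) off_diag
      + measure (map_pmf pr23 q) off_diag = 2 * measure q all_levels"
proof -
  have integrable: "integrable q (indicator A :: pt3 \<Rightarrow> real)" for A
    by (simp add: integrable_indicator_iff measure_pmf.emeasure_finite less_top[symmetric])
  have "measure (map_pmf pr12 q) off_diag + measure (map_pmf pr13 q) off_diag
      + measure (map_pmf pr23 q) off_diag
      = (\<integral>x. indicator (pr12 -` off_diag) x + indicator (pr13 -` off_diag) x
          + indicator (pr23 -` off_diag) x \<partial>q)"
    by (simp add: integrable)
  also have "\<dots> = (\<integral>x. 2 * indicator all_levels x \<partial>q)"
    using assms by (intro integral_cong_AE AE_pmfI indicator_off_diag_projections) auto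
  also have "\<dots> = 2 * measure q all_levels"
    by simp
  finally show ?thesis .
qed

lemma set_pmf_subset_all_levels_if_marginals_eq:
  fixes p q :: "pt3 pmf"
  assumes p: "set_pmf p \<subseteq> all_levels"
    and marginals: "map_pmf pr12 q = map_pmf pr12 p" "map_pmf pr13 q = map_pmf pr13 p"
      "map_pmf pr23 q = map_pmf pr23 p"
  shows "set_pmf q \<subseteq> all_levels"
proof -
  have near_p: "set_pmf (map_pmf pr12 p) \<subseteq> near_diag" "set_pmf (map_pmf pr13 p) \<subseteq> near_diag"
    "set_pmf (map_pmf pr23 p) \<subseteq> near_diag"
    using p all_levels_near_diag by auto
  have "measure p all_levels = 1"
    using p by (subst measure_pmf.prob_eq_1) (auto simp: AE_measure_pmf_iff)
  moreover have "2 * measure q all_levels = 2 * measure p all_levels"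
    using measure_off_diag_marginals[OF near_p] measure_off_diag_marginals[of q] near_p
    unfolding marginals by simp
  ultimately have "measure q all_levels = 1"
    by simp
  then show ?thesis
    by (subst (asm) measure_pmf.prob_eq_1) (auto simp: AE_measure_pmf_iff)
qed

lemma pmf_map_pmf_eq_add:
  assumes "{w \<in> set_pmf q. f w = z} \<subseteq> {x, y}" "f x = z" "f y = z" "x \<noteq> y"
  shows "pmf (map_pmf f q) z = pmf q x + pmf q y"
proof -
  have "f -` {z} \<inter> set_pmf q = {x, y} \<inter> set_pmf q"
    using assms by auto
  then have "pmf (map_pmf f q) z = measure q {x, y}"
    by (metis pmf_map measure_Int_set_pmf)
  also have "\<dots> = pmf q x + pmf q y"
    using assms(4) by (simp add: measure_measure_pmf_finite)
  finally show ?thesis .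
qed

lemma pmf_eq_if_marginals_eq_on_all_levels:
  fixes p q :: "pt3 pmf"
  assumes p: "set_pmf p \<subseteq> all_levels" and q: "set_pmf q \<subseteq> all_levels"
    and marginals: "map_pmf pr12 q = map_pmf pr12 p" "map_pmf pr13 q = map_pmf pr13 p"
      "map_pmf pr23 q = map_pmf pr23 p"
  shows "q = p"
proof -
  define g where "g x = pmf q x - pmf p x" for x
  have fibre: "g x + g y = 0"
    if "f \<in> {pr12, pr13, pr23}" "{w \<in> all_levels. f w = z} \<subseteq> {x, y}"
      "f x = z" "f y = z" "x \<noteq> y" for f x y z
  proof -
    have marginal: "pmf (map_pmf f r) z = pmf r x + pmf r y" if "set_pmf r \<subseteq> all_levels" for r
      using that \<open>{w \<in> all_levels. f w = z} \<subseteq> {x, y}\<close> \<open>f x = z\<close> \<open>f y = z\<close> \<open>x \<noteq> y\<close>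
      by (intro pmf_map_pmf_eq_add) auto
    have "map_pmf f q = map_pmf f p"
      using that(1) marginals by auto
    then have "pmf q x + pmf q y = pmf p x + pmf p y"
      using marginal[OF p] marginal[OF q] by simp
    then show ?thesis
      unfolding g_def by linarith
  qed
  note unfold_levels = all_levels_def Aset_def Bset_def pr12_def pr13_def pr23_def
  have level_eqs:
    "g (k, k, k+1) + g (k, k+1, k+1) = 0" "g (k, k+1, k) + g (k, k+1, k+1) = 0"
    "g (k, k+1, k) + g (k+1, k+1, k) = 0" "g (k+1, k, k) + g (k+1, k+1, k) = 0"
    "g (k+1, k, k) + g (k+1, k, k+1) = 0" "g (k+1, k+1, k) + g (k+1, k+1, k+2) = 0" for k
  proof -
    show "g (k, k, k+1) + g (k, k+1, k+1) = 0"
      by (rule fibre[where f = pr13 and z = "(k, k+1)"]) (auto simp: unfold_levels)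
    show "g (k, k+1, k) + g (k, k+1, k+1) = 0"
      by (rule fibre[where f = pr12 and z = "(k, k+1)"]) (auto simp: unfold_levels)
    show "g (k, k+1, k) + g (k+1, k+1, k) = 0"
      by (rule fibre[where f = pr23 and z = "(k+1, k)"]) (auto simp: unfold_levels)
    show "g (k+1, k, k) + g (k+1, k+1, k) = 0"
      by (rule fibre[where f = pr13 and z = "(k+1, k)"]) (auto simp: unfold_levels)
    show "g (k+1, k, k) + g (k+1, k, k+1) = 0"
      by (rule fibre[where f = pr12 and z = "(k+1, k)"]) (auto simp: unfold_levels)
    show "g (k+1, k+1, k) + g (k+1, k+1, k+2) = 0"
      by (rule fibre[where f = pr12 and z = "(k+1, k+1)"]) (auto simp: unfold_levels)
  qed
  have corner: "g (k, k, k+1) = 0" for k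
  proof (induction k)
    case 0
    have "(0, 0, 1) \<notin> set_pmf q" "(0, 0, 1) \<notin> set_pmf p"
      using p q by (auto simp: all_levels_def Aset_def Bset_def)
    then show ?case
      by (simp add: g_def set_pmf_iff)
  next
    case (Suc k)
    then show ?case
      using level_eqs(1-3)[of k] level_eqs(6)[of k] by (simp add: eval_nat_numeral)
  qed
  have "g x = 0" if "x \<in> level k" for x k
  proof -
    have "g (k, k, k+1) = 0" "g (k, k+1, k+1) = 0" "g (k, k+1, k) = 0"
      "g (k+1, k+1, k) = 0" "g (k+1, k, k) = 0" "g (k+1, k, k+1) = 0"
      using corner[of k] level_eqs(1-5)[of k] by linarith+
    with that show ?thesis
      by (auto simp: Aset_def Bset_def)
  qed
  moreover have "g x = 0" if "x \<notin> all_levels" for x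
  proof -
    have "x \<notin> set_pmf q" "x \<notin> set_pmf p"
      using that p q by auto
    then show ?thesis
      by (simp add: g_def set_pmf_iff)
  qed
  ultimately have "g x = 0" for x
    unfolding all_levels_def by blast
  then have "pmf q x = pmf p x" for x
    unfolding g_def by simp
  then show ?thesis
    by (rule pmf_eqI)
qed

definition potential_sum ::
    "(nat \<times> nat \<Rightarrow> 'a::plus) \<Rightarrow> (nat \<times> nat \<Rightarrow> 'a) \<Rightarrow> (nat \<times> nat \<Rightarrow> 'a) \<Rightarrow> pt3 \<Rightarrow> 'a" where
  "potential_sum f12 f13 f23 = (\<lambda>(a, b, d). f12 (a, b) + f13 (a, d) + f23 (b, d))"

lemma potential_sum_apply [simp]:
  "potential_sum f12 f13 f23 (a, b, d) = f12 (a, b) + f13 (a, d) + f23 (b, d)"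
  by (simp add: potential_sum_def)

lemma sum_Bset_potential_sum:
  fixes f12 f13 f23 :: "nat \<times> nat \<Rightarrow> 'a::comm_monoid_add"
  shows "(\<Sum>x\<in>Bset k. potential_sum f12 f13 f23 x) + potential_sum f12 f13 f23 (k, k, k)
    = (\<Sum>x\<in>Aset k. potential_sum f12 f13 f23 x) + potential_sum f12 f13 f23 (k+1, k+1, k+1)"
  unfolding Aset_def Bset_def by (simp add: ac_simps)

lemma cost_Aset: "x \<in> Aset k \<Longrightarrow> cost x = 0"
  unfolding cost_def Aset_def Bset_def by auto

lemma cost_Bset: "k \<ge> 1 \<Longrightarrow> x \<in> Bset k \<Longrightarrow> cost x = 1"
  unfolding cost_def by auto

lemma cost_diagonal: "cost (k, k, k) = 0"
  unfolding cost_def Bset_def by auto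

lemma sum_cost_Aset: "(\<Sum>x\<in>Aset k. cost x) = 0"
  by (simp add: cost_Aset)

lemma sum_cost_Bset: "k \<ge> 1 \<Longrightarrow> (\<Sum>x\<in>Bset k. cost x) = 3"
  using cost_Bset[of k] by (simp add: Bset_def)

lemma ereal_add3_eq_finite:
  fixes a b c :: ereal
  assumes "a + b + c = ereal r" "a \<noteq> \<infinity>" "b \<noteq> \<infinity>" "c \<noteq> \<infinity>"
  shows "\<bar>a\<bar> \<noteq> \<infinity> \<and> \<bar>b\<bar> \<noteq> \<infinity> \<and> \<bar>c\<bar> \<noteq> \<infinity>"
  using assms by (cases a; cases b; cases c) auto

lemma no_dual_potentials:
  fixes f12 f13 f23 :: "nat \<times> nat \<Rightarrow> ereal"
  assumes finite: "\<forall>z. f12 z \<noteq> \<infinity> \<and> f13 z \<noteq> \<infinity> \<and> f23 z \<noteq> \<infinity>"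
    and le: "\<And>a b d. f12 (a, b) + f13 (a, d) + f23 (b, d) \<le> cost (a, b, d)"
    and eq_levels: "\<And>a b d. (a, b, d) \<in> all_levels \<Longrightarrow>
      f12 (a, b) + f13 (a, d) + f23 (b, d) = cost (a, b, d)"
  shows False
proof -
  have eq: "potential_sum f12 f13 f23 x = cost x" if "x \<in> all_levels" for x
    using that eq_levels by (cases x) simp
  define D where "D k = potential_sum f12 f13 f23 (k, k, k)" for k
  have step: "D (Suc k) = D k + 3" if "k \<ge> 1" for k
  proof -
    have "Aset k \<subseteq> all_levels" "Bset k \<subseteq> all_levels"
      using that by (auto simp: all_levels_def)
    then have "(\<Sum>x\<in>Aset k. potential_sum f12 f13 f23 x) = (\<Sum>x\<in>Aset k. cost x)"
      "(\<Sum>x\<in>Bset k. potential_sum f12 f13 f23 x) = (\<Sum>x\<in>Bset k. cost x)"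
      using eq by (auto intro!: sum.cong)
    then show ?thesis
      using sum_Bset_potential_sum[of f12 f13 f23 k] sum_cost_Aset sum_cost_Bset[OF that]
      unfolding D_def by (simp add: add.commute)
  qed
  have nonpos: "D k \<le> 0" for k
    using le[of k k k] by (simp add: D_def cost_diagonal)
  have "\<bar>D 1\<bar> \<noteq> \<infinity>"
  proof -
    have "(1, 1, 2) \<in> all_levels" "(1, 2, 1) \<in> all_levels" "(2, 1, 1) \<in> all_levels"
      by (auto simp: all_levels_def Aset_def)
    then have "f12 (1, 1) + f13 (1, 2) + f23 (1, 2) = ereal 0"
      "f12 (1, 2) + f13 (1, 1) + f23 (2, 1) = ereal 0"
      "f12 (2, 1) + f13 (2, 1) + f23 (1, 1) = ereal 0"
      using eq cost_Aset[of _ 1] by (auto simp: Aset_def zero_ereal_def)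
    then show ?thesis
      using finite ereal_add3_eq_finite unfolding D_def by fastforce
  qed
  then obtain r where r: "D 1 = ereal r"
    by auto
  have D_Suc: "D (Suc n) = ereal (r + 3 * real n)" for n
  proof (induction n)
    case (Suc n)
    then show ?case
      using step[of "Suc n"] by (simp add: algebra_simps)
  qed (use r in simp)
  define n where "n = nat \<lceil>- r\<rceil> + 1"
  have "r \<le> 0"
    using nonpos[of 1] r by simp
  moreover have "- r \<le> real (nat \<lceil>- r\<rceil>)"
    by (rule of_nat_ceiling)
  ultimately have "r + 3 * real n > 0"
    unfolding n_def by (simp; linarith)
  then show False
    using nonpos[of "Suc n"] D_Suc[of n] by simp
qed

definition tight_dual_potentials :: "(pt3 \<Rightarrow> ereal) \<Rightarrow> pt3 pmf \<Rightarrow> bool" where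
  "tight_dual_potentials c p \<longleftrightarrow>
    (\<exists>f12 f13 f23 :: nat \<times> nat \<Rightarrow> ereal.
        (\<forall>z. f12 z \<noteq> \<infinity> \<and> f13 z \<noteq> \<infinity> \<and> f23 z \<noteq> \<infinity>) \<and>
        (\<forall>a b d. f12 (a, b) + f13 (a, d) + f23 (b, d) \<le> c (a, b, d)) \<and>
        (AE x in measure_pmf p. case x of (a, b, d) \<Rightarrow> f12 (a, b) + f13 (a, d) + f23 (b, d) = c (a, b, d)))"

lemma strongly_c_monotone_imp_tight_dual_potentials:
  "strongly_c_monotone c p \<Longrightarrow> tight_dual_potentials c p"
  unfolding strongly_c_monotone_def tight_dual_potentials_def
  by (elim exE conjE, intro exI conjI, assumption+) (auto elim!: AE_mp)

lemma not_tight_dual_potentials_mu: "\<not> tight_dual_potentials cost mu"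
proof
  assume "tight_dual_potentials cost mu"
  then obtain f12 f13 f23 :: "nat \<times> nat \<Rightarrow> ereal" where
    finite: "\<forall>z. f12 z \<noteq> \<infinity> \<and> f13 z \<noteq> \<infinity> \<and> f23 z \<noteq> \<infinity>"
    and le: "\<forall>a b d. f12 (a, b) + f13 (a, d) + f23 (b, d) \<le> cost (a, b, d)"
    and tight: "AE x in measure_pmf mu.
      case x of (a, b, d) \<Rightarrow> f12 (a, b) + f13 (a, d) + f23 (b, d) = cost (a, b, d)"
    unfolding tight_dual_potentials_def by blast
  show False
  proof (rule no_dual_potentials)
    show "f12 (a, b) + f13 (a, d) + f23 (b, d) = cost (a, b, d)"
      if "(a, b, d) \<in> all_levels" for a b d
      using tight that by (auto simp: AE_measure_pmf_iff set_pmf_mu)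
  qed (use finite le in auto)
qed

theorem mainTheorem14:
  shows "(\<forall>x. pmf mu x = mu_fun x) \<and>
    (\<forall>\<nu> :: pt3 pmf. map_pmf pr12 \<nu> = map_pmf pr12 mu \<and> map_pmf pr13 \<nu> = map_pmf pr13 mu
        \<and> map_pmf pr23 \<nu> = map_pmf pr23 mu \<longrightarrow> \<nu> = mu) \<and>
    \<not> (\<exists>(f12 :: nat \<times> nat \<Rightarrow> ereal) (f13 :: nat \<times> nat \<Rightarrow> ereal) (f23 :: nat \<times> nat \<Rightarrow> ereal).
        (\<forall>z. f12 z \<noteq> \<infinity> \<and> f13 z \<noteq> \<infinity> \<and> f23 z \<noteq> \<infinity>) \<and>
        (\<forall>a b d. f12 (a,b) + f13 (a,d) + f23 (b,d) \<le> cost (a,b,d)) \<and>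
        (AE x in measure_pmf mu. case x of (a,b,d) \<Rightarrow> f12 (a,b) + f13 (a,d) + f23 (b,d) = cost (a,b,d))) \<and>
    \<not> strongly_c_monotone cost mu"
proof -
  have "\<nu> = mu" if "map_pmf pr12 \<nu> = map_pmf pr12 mu" "map_pmf pr13 \<nu> = map_pmf pr13 mu"
    "map_pmf pr23 \<nu> = map_pmf pr23 mu" for \<nu>
    using set_pmf_subset_all_levels_if_marginals_eq[OF _ that] set_pmf_mu
    by (intro pmf_eq_if_marginals_eq_on_all_levels[OF _ _ that]) auto
  then show ?thesis
    using pmf_mu not_tight_dual_potentials_mu strongly_c_monotone_imp_tight_dual_potentials
    unfolding tight_dual_potentials_def by blast
qed

end
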